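(* Let $(X,\mathcal{A},p)$ be a standard Borel probability space, let $e$ be a measure-preserving, $p$-a.s. idempotent Markov kernel on $(X,\mathcal{A},p)$, and let $\mathcal{B}\subseteq\mathcal{A}$ be a sub-$\sigma$-algebra. Then $\mathcal{B}\subseteq\mathcal{I}_e$ if and only if $e_\mathcal{B}\le e$. In other words, the order-preserving assignment $\mathcal{B}\mapsto e_\mathcal{B}$ (from sub-$\sigma$-algebras ordered by inclusion to idempotents) is left adjoint to the order-preserving assignment $e\mapsto\mathcal{I}_e$.
   Context: Kernels are identified up to $p$-a.s. equality (for each $B$, equal $p$-a.e.), with composition $(\ell\circ k)(C\mid x)=\int\ell(C\mid y)k(dy\mid x)$. $e$ is $p$-a.s. idempotent if $e\circ e=e$ a.s. $\mathcal{I}_e=\{B\in\mathcal{A}: e(B\mid x)=1_B(x)$ for $p$-a.a. $x\}$. $e_\mathcal{B}$ is the (a.s.-class of the) kernel $e_\mathcal{B}(A\mid x)=\mathbb{P}[A\mid\mathcal{B}](x)=\mathbb{E}[1_A\mid\mathcal{B}](x)$, a regular conditional probability. The order on idempotents: $e_1\le e_2$ iff $e_1\circ e_2=e_2\circ e_1=e_1$ almost surely. *)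

theory Defs
  imports "HOL-Probability.Probability"
begin

(* Markov kernels on the measurable space of M are maps into the Giry
   probability algebra: k \<in> M \<rightarrow>\<^sub>M prob_algebra M, with k(B|x) = measure (k x) B. *)

definition markov_kernel :: "'a measure \<Rightarrow> ('a \<Rightarrow> 'a measure) \<Rightarrow> bool" where
  "markov_kernel M k \<longleftrightarrow> k \<in> M \<rightarrow>\<^sub>M prob_algebra M"

definition kernel_preserves :: "'a measure \<Rightarrow> ('a \<Rightarrow> 'a measure) \<Rightarrow> bool" where
  "kernel_preserves M k \<longleftrightarrow> (\<forall>B\<in>sets M. (\<integral>x. measure (k x) B \<partial>M) = measure M B)"

definition kcomp :: "('a \<Rightarrow> 'a measure) \<Rightarrow> ('a \<Rightarrow> 'a measure) \<Rightarrow> ('a \<Rightarrow> 'a measure)" where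
  "kcomp l k = (\<lambda>x. k x \<bind> l)"

definition kernel_ae_eq :: "'a measure \<Rightarrow> ('a \<Rightarrow> 'a measure) \<Rightarrow> ('a \<Rightarrow> 'a measure) \<Rightarrow> bool" where
  "kernel_ae_eq M k l \<longleftrightarrow> (\<forall>B\<in>sets M. AE x in M. measure (k x) B = measure (l x) B)"

definition kernel_idempotent :: "'a measure \<Rightarrow> ('a \<Rightarrow> 'a measure) \<Rightarrow> bool" where
  "kernel_idempotent M e \<longleftrightarrow> kernel_ae_eq M (kcomp e e) e"

definition invariant_sets :: "'a measure \<Rightarrow> ('a \<Rightarrow> 'a measure) \<Rightarrow> 'a set set" where
  "invariant_sets M e = {B \<in> sets M. AE x in M. measure (e x) B = indicator B x}"

definition kernel_le :: "'a measure \<Rightarrow> ('a \<Rightarrow> 'a measure) \<Rightarrow> ('a \<Rightarrow> 'a measure) \<Rightarrow> bool" where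
  "kernel_le M e1 e2 \<longleftrightarrow> kernel_ae_eq M (kcomp e1 e2) e1 \<and> kernel_ae_eq M (kcomp e2 e1) e1"

definition is_reg_cond_prob :: "'a measure \<Rightarrow> 'a measure \<Rightarrow> ('a \<Rightarrow> 'a measure) \<Rightarrow> bool" where
  "is_reg_cond_prob M F k \<longleftrightarrow> markov_kernel M k \<and>
     (\<forall>A\<in>sets M. AE x in M. measure (k x) A = real_cond_exp M F (indicator A) x)"

end

theory Submission
  imports Defs
begin

(* If F \<subseteq> I_e, every F-measurable h is a.s. invariant under e: its level sets {h > r},
   r rational, are invariant, so e(.|x) is concentrated on {y. h y = h x}. Applied to
   h = E[1_C|F] = e_F(C|.) this gives e_F \<circ> e = e_F. For invariant A, e(A \<inter> C|x) = 1_A(x) e(C|x),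
   so by measure preservation \<integral>_A e(C|x) dp = p(A \<inter> C); hence E[e(C|.)|F] = E[1_C|F], which is
   e \<circ> e_F = e_F because integrating against e_F computes conditional expectations.
   Conversely, if e_F \<circ> e = e_F and B \<in> F, then e_F(B|.) = 1_B a.s., and since e preserves
   null sets, e(B|x) = \<integral> e_F(B|y) e(dy|x) = e_F(B|x) = 1_B(x) for a.e. x. *)

lemma
  assumes "markov_kernel M k" and "x \<in> space M"
  shows sets_markov_kernel: "sets (k x) = sets M"
    and space_markov_kernel: "space (k x) = space M"
    and prob_space_markov_kernel: "prob_space (k x)"
proof -
  have "k x \<in> space (prob_algebra M)"
    using assms unfolding markov_kernel_def by (rule measurable_space)
  then show "sets (k x) = sets M" and "prob_space (k x)"
    by (auto simp: space_prob_algebra)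
  then show "space (k x) = space M"
    by (intro sets_eq_imp_space_eq)
qed

lemma measurable_markov_kernel_measure:
  assumes "markov_kernel M k" and "C \<in> sets M"
  shows "(\<lambda>x. measure (k x) C) \<in> borel_measurable M"
  using assms unfolding markov_kernel_def by measurable

lemma measurable_markov_kernel_fiber:
  assumes "markov_kernel M k" and "x \<in> space M" and "f \<in> M \<rightarrow>\<^sub>M N"
  shows "f \<in> k x \<rightarrow>\<^sub>M N"
  using assms(3) by (simp add: sets_markov_kernel[OF assms(1,2)] cong: measurable_cong_sets)

lemma integrable_markov_kernel_measure:
  assumes "finite_measure N" and "sets N = sets M"
    and "markov_kernel M k" and "C \<in> sets M"
  shows "integrable N (\<lambda>x. measure (k x) C)"
proof -
  interpret finite_measure N by fact
  have "space N = space M"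
    using assms(2) by (rule sets_eq_imp_space_eq)
  then show ?thesis
    using assms(2-4)
    by (intro integrable_const_bound[where B=1] AE_I2)
       (auto simp: prob_space.prob_le_1 prob_space_markov_kernel measurable_markov_kernel_measure
             cong: measurable_cong_sets)
qed

lemma measure_kcomp:
  assumes k: "markov_kernel M k" and l: "markov_kernel M l"
    and "x \<in> space M" and "C \<in> sets M"
  shows "measure (kcomp l k x) C = (\<integral>y. measure (l y) C \<partial>k x)"
proof -
  interpret prob_space "k x"
    using k assms(3) by (rule prob_space_markov_kernel)
  have "l \<in> k x \<rightarrow>\<^sub>M subprob_algebra M"
    using l unfolding markov_kernel_def
    by (intro measurable_markov_kernel_fiber[OF k assms(3)] measurable_prob_algebraD)
  then show ?thesis
    unfolding kcomp_def using assms(4) by (rule measure_bind)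
qed

lemma
  assumes "is_reg_cond_prob M F k"
  shows reg_cond_prob_markov_kernel: "markov_kernel M k"
    and AE_reg_cond_prob: "C \<in> sets M \<Longrightarrow> AE x in M. measure (k x) C = real_cond_exp M F (indicator C) x"
  using assms by (simp_all add: is_reg_cond_prob_def)

lemma AE_kernel_invariant_set:
  assumes e: "markov_kernel M e" and "B \<in> invariant_sets M e"
  shows "AE x in M. AE y in e x. y \<in> B \<longleftrightarrow> x \<in> B"
proof -
  have B: "B \<in> sets M" and "AE x in M. measure (e x) B = indicator B x"
    using assms(2) unfolding invariant_sets_def by blast+
  from this(2) AE_space show ?thesis
  proof eventually_elim
    case (elim x)
    interpret ex: prob_space "e x"
      using e elim(2) by (rule prob_space_markov_kernel)
    have "B \<in> ex.events"
      using B by (simp add: sets_markov_kernel[OF e elim(2)])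
    then show ?case
      using elim(1) by (cases "x \<in> B") (simp_all add: ex.AE_in_set_eq_1 ex.prob_eq_0)
  qed
qed

lemma AE_kernel_invariant_measurable:
  fixes h :: "'a \<Rightarrow> real"
  assumes e: "markov_kernel M e" and F: "subalgebra M F" and "sets F \<subseteq> invariant_sets M e"
    and h: "h \<in> borel_measurable F"
  shows "AE x in M. AE y in e x. h y = h x"
proof -
  have "AE x in M. AE y in e x. of_rat r < h y \<longleftrightarrow> of_rat r < h x" for r
  proof -
    have "{y \<in> space F. of_rat r < h y} \<in> sets F"
      using h by measurable
    then have "{y \<in> space M. of_rat r < h y} \<in> invariant_sets M e"
      using assms(3) F by (auto simp: subalgebra_def)
    from AE_kernel_invariant_set[OF e this] AE_space show ?thesis
    proof eventually_elim
      case (elim x)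
      from elim(1) AE_space show ?case
        by eventually_elim (use elim(2) in \<open>simp add: space_markov_kernel[OF e elim(2)]\<close>)
    qed
  qed
  then have "AE x in M. \<forall>r. AE y in e x. of_rat r < h y \<longleftrightarrow> of_rat r < h x"
    by (simp add: AE_all_countable)
  then show ?thesis
    using AE_space
  proof eventually_elim
    case (elim x)
    have "AE y in e x. \<forall>r. of_rat r < h y \<longleftrightarrow> of_rat r < h x"
      using elim(1) by (simp add: AE_all_countable)
    then show ?case
    proof (rule eventually_mono)
      fix y assume same_cut: "\<forall>r. of_rat r < h y \<longleftrightarrow> of_rat r < h x"
      show "h y = h x"
      proof (rule linorder_cases)
        assume "h y < h x"
        with of_rat_dense obtain r where "h y < of_rat r" "of_rat r < h x" by blast
        with same_cut[rule_format, of r] show ?thesis by linarith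
      next
        assume "h x < h y"
        with of_rat_dense obtain r where "h x < of_rat r" "of_rat r < h y" by blast
        with same_cut[rule_format, of r] show ?thesis by linarith
      qed
    qed
  qed
qed

lemma AE_kernel_invariant_Int:
  assumes e: "markov_kernel M e" and "A \<in> invariant_sets M e" and C: "C \<in> sets M"
  shows "AE x in M. measure (e x) (A \<inter> C) = indicator A x * measure (e x) C"
  using AE_kernel_invariant_set[OF assms(1,2)] AE_space
proof eventually_elim
  case (elim x)
  have A: "A \<in> sets (e x)" and "C \<in> sets (e x)"
    using assms(2) C by (auto simp: invariant_sets_def sets_markov_kernel[OF e elim(2)])
  then show ?case
    using elim(1) by (cases "x \<in> A") (auto intro: measure_eq_AE[THEN trans] elim: AE_mp)
qed

context sigma_finite_subalgebra
begin

lemma nn_cond_exp_SUP: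
  assumes [measurable]: "\<And>i. U i \<in> borel_measurable M" and "incseq U"
  shows "AE x in M. (SUP i. nn_cond_exp M F (U i) x) = nn_cond_exp M F (SUP i. U i) x"
proof (rule nn_cond_exp_charact)
  fix A assume A: "A \<in> sets F"
  then have [measurable]: "A \<in> sets M"
    using subalg by (auto simp: subalgebra_def)
  have mono: "AE x in M. nn_cond_exp M F (U i) x \<le> nn_cond_exp M F (U (Suc i)) x" for i
    using \<open>incseq U\<close> by (intro nn_cond_exp_mono) (auto simp: incseq_Suc_iff le_fun_def)
  have mono_AE: "AE x in M. nn_cond_exp M F (U i) x * indicator A x
      \<le> nn_cond_exp M F (U (Suc i)) x * indicator A x" for i
    using mono[of i] by (rule eventually_mono) (auto intro: mult_right_mono)
  have "(\<integral>\<^sup>+x\<in>A. (SUP i. U i) x \<partial>M) = (\<integral>\<^sup>+x. (SUP i. U i x * indicator A x) \<partial>M)"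
    by (simp only: SUP_apply SUP_mult_right_ennreal)
  also have "\<dots> = (SUP i. \<integral>\<^sup>+x. U i x * indicator A x \<partial>M)"
    using \<open>incseq U\<close>
    by (intro nn_integral_monotone_convergence_SUP)
       (auto simp: incseq_def le_fun_def intro: mult_right_mono)
  also have "\<dots> = (SUP i. \<integral>\<^sup>+x. nn_cond_exp M F (U i) x * indicator A x \<partial>M)"
    using A by (simp add: nn_cond_exp_intg mult.commute)
  also have "\<dots> = (\<integral>\<^sup>+x. (SUP i. nn_cond_exp M F (U i) x * indicator A x) \<partial>M)"
    using mono_AE by (intro nn_integral_monotone_convergence_SUP_AE[symmetric]) auto
  also have "\<dots> = (\<integral>\<^sup>+x\<in>A. (SUP i. nn_cond_exp M F (U i) x) \<partial>M)"
    by (simp only: SUP_mult_right_ennreal)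
  finally show "(\<integral>\<^sup>+x\<in>A. (SUP i. U i) x \<partial>M) = (\<integral>\<^sup>+x\<in>A. (SUP i. nn_cond_exp M F (U i) x) \<partial>M)" .
next
  have "(SUP i. U i) = (\<lambda>x. SUP i. U i x)"
    by (rule ext) (simp only: SUP_apply)
  then show "(SUP i. U i) \<in> borel_measurable M"
    by (simp only:) measurable
next
  show "(\<lambda>x. SUP i. nn_cond_exp M F (U i) x) \<in> borel_measurable F"
    by measurable
qed

lemma real_cond_exp_nonneg_eq:
  assumes "\<And>x. 0 \<le> f x"
  shows "AE x in M. real_cond_exp M F f x = enn2real (nn_cond_exp M F (\<lambda>x. ennreal (f x)) x)"
proof -
  have "(\<lambda>x. ennreal (- f x)) = (\<lambda>_. 0)"
    using assms by (simp add: ennreal_neg)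
  moreover have "AE x in M. nn_cond_exp M F (\<lambda>_. 0) x = 0"
    using nn_cond_exp_F_meas[of "\<lambda>_. 0"] by auto
  ultimately show ?thesis
    by (auto simp: real_cond_exp_def elim!: eventually_mono)
qed

lemma reg_cond_prob_emeasure:
  assumes "is_reg_cond_prob M F k" and A: "A \<in> sets M"
  shows "AE x in M. emeasure (k x) A = nn_cond_exp M F (indicator A) x"
proof -
  have k: "markov_kernel M k"
    using assms(1) by (rule reg_cond_prob_markov_kernel)
  have "AE x in M. nn_cond_exp M F (indicator A) x \<le> nn_cond_exp M F (\<lambda>_. 1) x"
    using A by (intro nn_cond_exp_mono) (auto simp: indicator_def)
  moreover have "AE x in M. nn_cond_exp M F (\<lambda>_. 1) x = 1"
    using nn_cond_exp_F_meas[of "\<lambda>_. 1"] by auto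
  moreover have "AE x in M. measure (k x) A = real_cond_exp M F (indicator A) x"
    using assms by (rule AE_reg_cond_prob)
  moreover note real_cond_exp_nonneg_eq[of "indicator A", OF indicator_pos_le]
  ultimately show ?thesis
    using AE_space
  proof eventually_elim
    case (elim x)
    interpret kx: prob_space "k x"
      using k elim(5) by (rule prob_space_markov_kernel)
    have "nn_cond_exp M F (indicator A) x < top"
      using elim(1,2) by (simp add: le_less_trans)
    then show ?case
      using elim(3,4) by (simp add: kx.emeasure_eq_measure ennreal_indicator ennreal_enn2real)
  qed
qed

lemma reg_cond_prob_nn_integral:
  assumes "is_reg_cond_prob M F k" and "u \<in> borel_measurable M"
  shows "AE x in M. (\<integral>\<^sup>+y. u y \<partial>k x) = nn_cond_exp M F u x"
  using assms(2)
proof (induction rule: borel_measurable_induct)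
  note k = reg_cond_prob_markov_kernel[OF assms(1)]
  note fiber = measurable_markov_kernel_fiber[OF k]
  {
    case (cong f g)
    have "AE x in M. nn_cond_exp M F f x = nn_cond_exp M F g x"
      using cong by (intro nn_cond_exp_cong) auto
    from this cong(4) AE_space show ?case
    proof eventually_elim
      case (elim x)
      have "(\<integral>\<^sup>+y. f y \<partial>k x) = (\<integral>\<^sup>+y. g y \<partial>k x)"
        using cong(3) by (intro nn_integral_cong) (simp add: space_markov_kernel[OF k elim(3)])
      with elim(1,2) show ?case by simp
    qed
  next
    case (set A)
    from reg_cond_prob_emeasure[OF assms(1) set] AE_space show ?case
    proof eventually_elim
      case (elim x)
      with set show ?case by (simp add: sets_markov_kernel[OF k])
    qed
  next
    case (mult u c)
    have "AE x in M. c * nn_cond_exp M F u x = nn_cond_exp M F (\<lambda>x. c * u x) x"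
      using mult by (intro nn_cond_exp_prod) auto
    from this mult(4) AE_space show ?case
    proof eventually_elim
      case (elim x)
      with fiber[OF _ mult(2)] show ?case by (simp add: nn_integral_cmult)
    qed
  next
    case (add u v)
    have "AE x in M. nn_cond_exp M F v x + nn_cond_exp M F u x = nn_cond_exp M F (\<lambda>x. v x + u x) x"
      using add by (intro nn_cond_exp_sum) auto
    from this add.IH AE_space show ?case
    proof eventually_elim
      case (elim x)
      with fiber[OF _ add(1)] fiber[OF _ add(3)] show ?case by (simp add: nn_integral_add)
    qed
  next
    case (seq U)
    have "AE x in M. \<forall>i. (\<integral>\<^sup>+y. U i y \<partial>k x) = nn_cond_exp M F (U i) x"
      using seq.IH by (simp add: AE_all_countable)
    from this nn_cond_exp_SUP[OF seq.hyps(1) \<open>incseq U\<close>] AE_space show ?case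
    proof eventually_elim
      case (elim x)
      have "(\<integral>\<^sup>+y. (SUP i. U i) y \<partial>k x) = (SUP i. \<integral>\<^sup>+y. U i y \<partial>k x)"
        unfolding SUP_apply using \<open>incseq U\<close> fiber[OF elim(3) seq.hyps(1)]
        by (intro nn_integral_monotone_convergence_SUP) auto
      with elim(1,2) show ?case by (simp only:)
    qed
  }
qed

lemma reg_cond_prob_integral:
  assumes "is_reg_cond_prob M F k" and [measurable]: "u \<in> borel_measurable M"
    and nonneg: "\<And>x. 0 \<le> u x"
  shows "AE x in M. (\<integral>y. u y \<partial>k x) = real_cond_exp M F u x"
proof -
  note k = reg_cond_prob_markov_kernel[OF assms(1)]
  have "AE x in M. (\<integral>\<^sup>+y. ennreal (u y) \<partial>k x) = nn_cond_exp M F (\<lambda>x. ennreal (u x)) x"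
    using assms(1) by (rule reg_cond_prob_nn_integral) measurable
  from this real_cond_exp_nonneg_eq[of u, OF nonneg] AE_space show ?thesis
  proof eventually_elim
    case (elim x)
    have "(\<integral>y. u y \<partial>k x) = enn2real (\<integral>\<^sup>+y. ennreal (u y) \<partial>k x)"
      using nonneg by (intro integral_eq_nn_integral measurable_markov_kernel_fiber[OF k elim(3)]) auto
    with elim(1,2) show ?case by simp
  qed
qed

end

locale measure_preserving_kernel = prob_space M for M :: "'a measure" +
  fixes e :: "'a \<Rightarrow> 'a measure"
  assumes markov: "markov_kernel M e"
    and preserving: "kernel_preserves M e"
begin

lemma AE_kernel_null_set:
  assumes "N \<in> null_sets M"
  shows "AE x in M. measure (e x) N = 0"
proof -
  have N: "N \<in> sets M"
    using assms by blast
  have "(\<integral>x. measure (e x) N \<partial>M) = measure M N"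
    using preserving N unfolding kernel_preserves_def by blast
  also have "\<dots> = 0"
    using assms by (simp add: measure_def null_setsD1)
  finally show ?thesis
    using integrable_markov_kernel_measure[OF finite_measure_axioms refl markov N]
    by (simp add: integral_nonneg_eq_0_iff_AE)
qed

lemma AE_kernel_AE:
  assumes [measurable]: "Measurable.pred M P" and "AE y in M. P y"
  shows "AE x in M. AE y in e x. P y"
proof -
  let ?N = "{y \<in> space M. \<not> P y}"
  have "?N \<in> null_sets M"
    using assms by (simp add: AE_iff_null)
  with AE_kernel_null_set have "AE x in M. measure (e x) ?N = 0" .
  then show ?thesis
    using AE_space
  proof eventually_elim
    case (elim x)
    then have x: "x \<in> space M" and "measure (e x) ?N = 0" by blast+
    interpret ex: prob_space "e x"
      using markov x by (rule prob_space_markov_kernel)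
    have "?N \<in> null_sets (e x)"
      using \<open>measure (e x) ?N = 0\<close> \<open>?N \<in> null_sets M\<close>
      by (auto simp: ex.emeasure_eq_measure sets_markov_kernel[OF markov x])
    then show "AE y in e x. P y"
      by (simp add: AE_iff_null space_markov_kernel[OF markov x] sets_markov_kernel[OF markov x])
  qed
qed

lemma AE_kernel_integral_cong:
  fixes f g :: "'a \<Rightarrow> real"
  assumes [measurable]: "f \<in> borel_measurable M" "g \<in> borel_measurable M"
    and "AE y in M. f y = g y"
  shows "AE x in M. (\<integral>y. f y \<partial>e x) = (\<integral>y. g y \<partial>e x)"
proof -
  have "AE x in M. AE y in e x. f y = g y"
    using assms(3) by (intro AE_kernel_AE) measurable
  then show ?thesis
    using AE_space
  proof eventually_elim
    case (elim x)
    then show ?case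
      by (intro integral_cong_AE measurable_markov_kernel_fiber[OF markov] assms(1,2))
  qed
qed

lemma set_integral_kernel_invariant:
  assumes A: "A \<in> invariant_sets M e" and C: "C \<in> sets M"
  shows "(\<integral>x\<in>A. measure (e x) C \<partial>M) = measure M (A \<inter> C)"
proof -
  have "A \<in> sets M" and "A \<inter> C \<in> sets M"
    using A C by (auto simp: invariant_sets_def)
  note [measurable] = \<open>A \<in> sets M\<close>
    measurable_markov_kernel_measure[OF markov C]
    measurable_markov_kernel_measure[OF markov \<open>A \<inter> C \<in> sets M\<close>]
  have "(\<integral>x\<in>A. measure (e x) C \<partial>M) = (\<integral>x. measure (e x) (A \<inter> C) \<partial>M)"
    unfolding set_lebesgue_integral_def
    by (rule integral_cong_AE) (use AE_kernel_invariant_Int[OF markov A C] in auto)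
  also have "\<dots> = measure M (A \<inter> C)"
    using preserving \<open>A \<inter> C \<in> sets M\<close> by (simp add: kernel_preserves_def)
  finally show ?thesis .
qed

context
  fixes F :: "'a measure"
  assumes subalg: "subalgebra M F"
begin

interpretation F: finite_measure_subalgebra M F
  by unfold_locales (rule subalg)

lemma real_cond_exp_kernel_measure:
  assumes inv: "sets F \<subseteq> invariant_sets M e" and C: "C \<in> sets M"
  shows "AE x in M. real_cond_exp M F (\<lambda>y. measure (e y) C) x = real_cond_exp M F (indicator C) x"
proof (rule F.real_cond_exp_charact)
  fix A assume A: "A \<in> sets F"
  have "A \<in> invariant_sets M e" and "A \<in> sets M"
    using A inv subalg by (auto simp: subalgebra_def)
  then have "(\<integral>x\<in>A. measure (e x) C \<partial>M) = measure M (A \<inter> C)"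
    using C by (intro set_integral_kernel_invariant)
  also have "\<dots> = (\<integral>x\<in>A. indicator C x \<partial>M)"
    using \<open>A \<in> sets M\<close> C
    by (simp add: set_lebesgue_integral_def indicator_inter_arith[symmetric])
  also have "\<dots> = (\<integral>x\<in>A. real_cond_exp M F (indicator C) x \<partial>M)"
    using A C by (intro F.real_cond_exp_intA)
      (simp_all add: integrable_real_indicator emeasure_finite less_top[symmetric])
  finally show "(\<integral>x\<in>A. measure (e x) C \<partial>M) = (\<integral>x\<in>A. real_cond_exp M F (indicator C) x \<partial>M)" .
next
  show "integrable M (\<lambda>y. measure (e y) C)"
    using finite_measure_axioms markov C by (rule integrable_markov_kernel_measure[OF _ refl])
  show "integrable M (real_cond_exp M F (indicator C))"
    using C by (intro F.real_cond_exp_int(1))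
      (simp add: integrable_real_indicator emeasure_finite less_top[symmetric])
qed simp

context
  fixes eF :: "'a \<Rightarrow> 'a measure"
  assumes reg_cond_prob: "is_reg_cond_prob M F eF"
begin

lemmas eF_markov_kernel = reg_cond_prob_markov_kernel[OF reg_cond_prob]
lemmas AE_eF = AE_reg_cond_prob[OF reg_cond_prob]

lemma kcomp_reg_cond_prob_kernel:
  assumes inv: "sets F \<subseteq> invariant_sets M e"
  shows "kernel_ae_eq M (kcomp eF e) eF"
  unfolding kernel_ae_eq_def
proof
  fix C assume C: "C \<in> sets M"
  let ?g = "real_cond_exp M F (indicator C)"
  have "AE x in M. (\<integral>y. measure (eF y) C \<partial>e x) = (\<integral>y. ?g y \<partial>e x)"
    using measurable_markov_kernel_measure[OF eF_markov_kernel C]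
    by (rule AE_kernel_integral_cong) (simp_all add: AE_eF[OF C])
  moreover have "AE x in M. AE y in e x. ?g y = ?g x"
    using markov subalg inv borel_measurable_cond_exp by (rule AE_kernel_invariant_measurable)
  moreover note AE_eF[OF C]
  ultimately show "AE x in M. measure (kcomp eF e x) C = measure (eF x) C"
    using AE_space
  proof eventually_elim
    case (elim x)
    interpret ex: prob_space "e x"
      using markov elim(4) by (rule prob_space_markov_kernel)
    have "(\<integral>y. ?g y \<partial>e x) = (\<integral>y. ?g x \<partial>e x)"
      using elim(2) by (intro integral_cong_AE) (simp_all add: measurable_markov_kernel_fiber[OF markov elim(4)])
    with elim(1,3) show ?case
      by (simp add: measure_kcomp[OF markov eF_markov_kernel elim(4) C] ex.prob_space)
  qed
qed

lemma kcomp_kernel_reg_cond_prob: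
  assumes inv: "sets F \<subseteq> invariant_sets M e"
  shows "kernel_ae_eq M (kcomp e eF) eF"
  unfolding kernel_ae_eq_def
proof
  fix C assume C: "C \<in> sets M"
  have "AE x in M. (\<integral>y. measure (e y) C \<partial>eF x) = real_cond_exp M F (\<lambda>y. measure (e y) C) x"
    using reg_cond_prob measurable_markov_kernel_measure[OF markov C]
    by (rule F.reg_cond_prob_integral) simp
  from this real_cond_exp_kernel_measure[OF inv C] AE_eF[OF C] AE_space
  show "AE x in M. measure (kcomp e eF x) C = measure (eF x) C"
  proof eventually_elim
    case (elim x)
    then show ?case
      by (simp add: measure_kcomp[OF eF_markov_kernel markov elim(4) C])
  qed
qed

lemma invariant_sets_if_kcomp_reg_cond_prob_kernel:
  assumes "kernel_ae_eq M (kcomp eF e) eF"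
  shows "sets F \<subseteq> invariant_sets M e"
proof
  fix B assume B: "B \<in> sets F"
  then have [measurable]: "B \<in> sets M"
    using subalg by (auto simp: subalgebra_def)
  have "AE y in M. real_cond_exp M F (indicator B) y = indicator B y"
    using B by (intro F.real_cond_exp_F_meas)
      (simp_all add: integrable_real_indicator emeasure_finite less_top[symmetric])
  then have eF_B: "AE y in M. measure (eF y) B = indicator B y"
    using AE_eF[OF \<open>B \<in> sets M\<close>] by eventually_elim simp
  have "AE x in M. (\<integral>y. measure (eF y) B \<partial>e x) = (\<integral>y. indicator B y \<partial>e x)"
    using measurable_markov_kernel_measure[OF eF_markov_kernel \<open>B \<in> sets M\<close>] _ eF_B
    by (rule AE_kernel_integral_cong) measurable
  moreover have "AE x in M. measure (kcomp eF e x) B = measure (eF x) B"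
    using assms \<open>B \<in> sets M\<close> by (simp add: kernel_ae_eq_def)
  ultimately have "AE x in M. measure (e x) B = indicator B x"
    using eF_B AE_space
  proof eventually_elim
    case (elim x)
    have "measure (e x) B = (\<integral>y. indicator B y \<partial>e x)"
      by (simp add: sets_markov_kernel[OF markov elim(4)])
    also have "\<dots> = measure (kcomp eF e x) B"
      using elim(1) by (simp add: measure_kcomp[OF markov eF_markov_kernel elim(4)])
    finally show ?case
      using elim(2,3) by simp
  qed
  with \<open>B \<in> sets M\<close> show "B \<in> invariant_sets M e"
    by (simp add: invariant_sets_def)
qed

end

end

end

theorem theorem4p13:
  fixes M :: "'a::polish_space measure" and F :: "'a measure"
    and e eF :: "'a \<Rightarrow> 'a measure"
  assumes "prob_space M" and "sets M = sets borel"
    and "markov_kernel M e" and "kernel_preserves M e" and "kernel_idempotent M e"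
    and "subalgebra M F"
    and "is_reg_cond_prob M F eF"
  shows "sets F \<subseteq> invariant_sets M e \<longleftrightarrow> kernel_le M eF e"
proof -
  interpret measure_preserving_kernel M e
    using assms(1,3,4) by (simp add: measure_preserving_kernel_def measure_preserving_kernel_axioms_def)
  show ?thesis
    using kcomp_reg_cond_prob_kernel[OF assms(6,7)] kcomp_kernel_reg_cond_prob[OF assms(6,7)]
      invariant_sets_if_kcomp_reg_cond_prob_kernel[OF assms(6,7)]
    unfolding kernel_le_def by blast
qed

end
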